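(* Let $q$ be a prime integer different from $p$. For every $0\le k\le r$, the ideal $\mathcal S^k(q)=[(q),(q),\dots,(q)]$ (with $(q)=qR_j$ in each $R_j$, $0\le j\le k$) is a prime ideal of $\Omega_{H_k}$.
   Context: Fix a prime $p$ and an integer $r\ge0$. For $0\le k\le r$ let $R_k$ be the commutative ring which is free as a $\mathbb{Z}$-module with basis $X_{k,0},\dots,X_{k,k}$ and multiplication $X_{k,i}X_{k,j}=p^{k-\max(i,j)}X_{k,\min(i,j)}$; thus $X_{k,k}=1$, and an integer $n$ is identified with $nX_{k,k}$. For $0\le k\le\ell\le r$ define: the additive map $\mathrm{ind}^\ell_k:R_k\to R_\ell$, $X_{k,i}\mapsto X_{\ell,i}$; the ring homomorphism $\mathrm{res}^\ell_k:R_\ell\to R_k$, $\mathrm{res}^\ell_k(X_{\ell,i})=p^{\ell-k}X_{k,i}$ if $i\le k$ and $=p^{\ell-i}$ if $i\ge k$; and the multiplicative map $\mathrm{jnd}^\ell_k:R_k\to R_\ell$, $$\mathrm{jnd}^\ell_k\Big(\sum_{i=0}^k m_iX_{k,i}\Big)=m_kX_{\ell,\ell}+\sum_{k\le i<\ell}\frac{m_k^{p^{\ell-i}}-m_k^{p^{\ell-i-1}}}{p^{\ell-i}}X_{\ell,i}+\sum_{0\le i<k}\frac{(\sum_{s=i}^k m_sp^{k-s})^{p^{\ell-k}}-(\sum_{s=i+1}^k m_sp^{k-s})^{p^{\ell-k}}}{p^{\ell-i}}X_{\ell,i}$$ ($m_i\in\mathbb{Z}$). For $k=\ell$ these maps are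 the identity. These data form the Burnside Tambara functor on $\mathbb{Z}/p^r\mathbb{Z}$; keeping indices $\le n$ gives $\Omega_{H_n}$. An ideal of $\Omega_{H_n}$ is a sequence $[I_0,\dots,I_n]$ of ideals $I_k\subseteq R_k$ such that for every $1\le k\le n$: $\mathrm{ind}^k_{k-1}(I_{k-1})\subseteq I_k$, $\mathrm{res}^k_{k-1}(I_k)\subseteq I_{k-1}$, $\mathrm{jnd}^k_{k-1}(I_{k-1})\subseteq I_k$. It is proper if $I_0\ne R_0$. A proper ideal is prime if for all $0\le\ell\le k\le n$, $a\in R_k$, $b\in R_\ell$: whenever $(\mathrm{jnd}^m_i\mathrm{res}^k_i(a))\cdot(\mathrm{jnd}^m_j\mathrm{res}^\ell_j(b))\in I_m$ for all $0\le i\le k$, $0\le j\le\ell$, $m=\max(i,j)$, then $a\in I_k$ or $b\in I_\ell$. *)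

theory Defs
  imports "HOL-Computational_Algebra.Primes"
begin

text \<open>Elements of R_k are represented by their coefficient functions
  m :: nat => int, where m i is the coefficient of X_{k,i}; they are
  required to vanish for i > k.\<close>

definition Rcarrier :: "nat \<Rightarrow> (nat \<Rightarrow> int) set" where
  "Rcarrier k = {m. \<forall>i. k < i \<longrightarrow> m i = 0}"

definition Radd :: "nat \<Rightarrow> (nat \<Rightarrow> int) \<Rightarrow> (nat \<Rightarrow> int) \<Rightarrow> (nat \<Rightarrow> int)" where
  "Radd k a b = (\<lambda>t. if t \<le> k then a t + b t else 0)"

text \<open>X_{k,i} X_{k,j} = p^(k - max i j) X_{k, min i j}, extended bilinearly.\<close>
definition Rmult :: "nat \<Rightarrow> nat \<Rightarrow> (nat \<Rightarrow> int) \<Rightarrow> (nat \<Rightarrow> int) \<Rightarrow> (nat \<Rightarrow> int)" where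
  "Rmult p k a b = (\<lambda>t. if t \<le> k then
      (\<Sum>i\<le>k. \<Sum>j\<le>k. if min i j = t then a i * b j * int p ^ (k - max i j) else 0)
    else 0)"

definition ind :: "nat \<Rightarrow> nat \<Rightarrow> (nat \<Rightarrow> int) \<Rightarrow> (nat \<Rightarrow> int)" where
  "ind l k a = (\<lambda>t. if t \<le> k then a t else 0)"

text \<open>res^l_k : X_{l,i} |-> p^(l-k) X_{k,i} (i <= k), p^(l-i) X_{k,k} (i >= k)\<close>
definition res :: "nat \<Rightarrow> nat \<Rightarrow> nat \<Rightarrow> (nat \<Rightarrow> int) \<Rightarrow> (nat \<Rightarrow> int)" where
  "res p l k a = (\<lambda>t. if t < k then int p ^ (l - k) * a t
      else if t = k then (\<Sum>i\<in>{k..l}. int p ^ (l - i) * a i)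
      else 0)"

text \<open>jnd^l_k (the norm map); the divisions are exact integer divisions.\<close>
definition jnd :: "nat \<Rightarrow> nat \<Rightarrow> nat \<Rightarrow> (nat \<Rightarrow> int) \<Rightarrow> (nat \<Rightarrow> int)" where
  "jnd p l k a = (\<lambda>t.
      if t = l then a k
      else if k \<le> t \<and> t < l then
        (a k ^ (p ^ (l - t)) - a k ^ (p ^ (l - t - 1))) div (int p ^ (l - t))
      else if t < k then
        ((\<Sum>s\<in>{t..k}. a s * int p ^ (k - s)) ^ (p ^ (l - k))
          - (\<Sum>s\<in>{t+1..k}. a s * int p ^ (k - s)) ^ (p ^ (l - k))) div (int p ^ (l - t))
      else 0)"

definition R_ideal :: "nat \<Rightarrow> nat \<Rightarrow> (nat \<Rightarrow> int) set \<Rightarrow> bool" where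
  "R_ideal p k I \<longleftrightarrow> I \<subseteq> Rcarrier k \<and> I \<noteq> {} \<and>
     (\<forall>a\<in>I. \<forall>b\<in>I. Radd k a b \<in> I) \<and>
     (\<forall>a\<in>I. \<forall>x\<in>Rcarrier k. Rmult p k x a \<in> I)"

definition Tambara_ideal :: "nat \<Rightarrow> nat \<Rightarrow> (nat \<Rightarrow> (nat \<Rightarrow> int) set) \<Rightarrow> bool" where
  "Tambara_ideal p n I \<longleftrightarrow>
     (\<forall>k\<le>n. R_ideal p k (I k)) \<and>
     (\<forall>k. 1 \<le> k \<and> k \<le> n \<longrightarrow>
        ind k (k - 1) ` I (k - 1) \<subseteq> I k \<and>
        res p k (k - 1) ` I k \<subseteq> I (k - 1) \<and>
        jnd p k (k - 1) ` I (k - 1) \<subseteq> I k)"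

definition Tambara_proper :: "nat \<Rightarrow> nat \<Rightarrow> (nat \<Rightarrow> (nat \<Rightarrow> int) set) \<Rightarrow> bool" where
  "Tambara_proper p n I \<longleftrightarrow> Tambara_ideal p n I \<and> I 0 \<noteq> Rcarrier 0"

definition Tambara_prime :: "nat \<Rightarrow> nat \<Rightarrow> (nat \<Rightarrow> (nat \<Rightarrow> int) set) \<Rightarrow> bool" where
  "Tambara_prime p n I \<longleftrightarrow> Tambara_proper p n I \<and>
     (\<forall>l k a b. l \<le> k \<and> k \<le> n \<and> a \<in> Rcarrier k \<and> b \<in> Rcarrier l \<longrightarrow>
        (\<forall>i\<le>k. \<forall>j\<le>l.
           Rmult p (max i j) (jnd p (max i j) i (res p k i a)) (jnd p (max i j) j (res p l j b))
             \<in> I (max i j))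
        \<longrightarrow> a \<in> I k \<or> b \<in> I l)"

definition principal_int :: "nat \<Rightarrow> nat \<Rightarrow> (nat \<Rightarrow> int) set" where
  "principal_int q j = {(\<lambda>t. int q * a t) | a. a \<in> Rcarrier j}"

definition S_ideal :: "nat \<Rightarrow> nat \<Rightarrow> (nat \<Rightarrow> int) set" where
  "S_ideal q = (\<lambda>j. principal_int q j)"

end

theory Submission
  imports Defs "HOL-Number_Theory.Number_Theory"
begin

text \<open>For a \<in> R_k and i \<le> k, the top coefficient of res^k_i a is the mark
  \<Sum>s\<in>{i..k}. p^(k-s) a_s. The marks arise from the coefficients by a triangular system
  with diagonal entries powers of p, which are units modulo q; hence a lies in (q) iff q
  divides all its marks. The top coefficient of jnd^m_i x \<cdot> jnd^m_j y is x_i y_j, so the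
  primality condition reduces to primality of q in \<int>. Closure under jnd^{k+1}_k holds
  because, by Fermat and lifting the exponent, the power of p dividing out is already a
  factor of the numerator, while q divides the numerator and is coprime to p.\<close>

lemma prime_dvd_power_minus_self:
  fixes x :: int and p :: nat
  assumes "prime p"
  shows "int p dvd x ^ p - x"
proof -
  have p0: "p > 0" using assms prime_gt_0_nat by blast
  define y where "y = nat (x mod int p)"
  have "[y ^ p = y] (mod p)"
  proof (cases "p dvd y")
    case True
    moreover have "p dvd y ^ p" using True p0 dvd_trans dvd_power by blast
    ultimately show ?thesis by (simp add: cong_def dvd_imp_mod_0)
  next
    case False
    then have "[y * y ^ (p - 1) = y * 1] (mod p)"
      using fermat_theorem[OF assms] cong_scalar_left by blast
    then show ?thesis using p0 by (simp add: power_eq_if)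
  qed
  then have "[int y ^ p = int y] (mod int p)"
    by (metis cong_int_iff of_nat_power)
  moreover have "[x = int y] (mod int p)"
    using p0 by (simp add: y_def cong_def)
  ultimately show ?thesis
    by (meson cong_iff_dvd_diff cong_pow cong_sym cong_trans)
qed

lemma lifting_exponent_step:
  fixes x y :: int and p :: nat
  assumes "int p ^ e dvd x - y" "int p dvd x - y"
  shows "int p ^ Suc e dvd x ^ p - y ^ p"
proof -
  have "[x = y] (mod int p)" using assms(2) by (simp add: cong_iff_dvd_diff)
  then have "[(\<Sum>i<p. y ^ (p - Suc i) * x ^ i) = (\<Sum>i<p. y ^ (p - Suc i) * y ^ i)] (mod int p)"
    by (intro cong_sum cong_mult cong_refl cong_pow)
  also have "(\<Sum>i<p. y ^ (p - Suc i) * y ^ i) = int p * y ^ (p - 1)"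
    by (simp flip: power_add)
  finally have "int p dvd (\<Sum>i<p. y ^ (p - Suc i) * x ^ i)"
    by (simp add: cong_dvd_iff)
  with assms(1) have "int p ^ e * int p dvd (x - y) * (\<Sum>i<p. y ^ (p - Suc i) * x ^ i)"
    by (rule mult_dvd_mono)
  then show ?thesis by (simp add: power_diff_sumr2 mult.commute)
qed

lemma coprime_dvd_div:
  fixes a b c :: "'a::semiring_gcd"
  assumes "coprime a b" "b dvd c" "a dvd c"
  shows "a dvd c div b"
proof (cases "b = 0")
  case False
  from \<open>b dvd c\<close> obtain d where "c = b * d" ..
  then show ?thesis using assms False by (simp add: coprime_dvd_mult_right_iff)
qed simp

lemma Rmult_top: "Rmult p m x y m = x m * y m"
proof -
  have "(\<Sum>i\<le>m. \<Sum>j\<le>m. if min i j = m then x i * y j * int p ^ (m - max i j) else 0)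
      = (\<Sum>i\<le>m. if i = m then \<Sum>j\<le>m. if j = m then x m * y m else 0 else 0)"
    by (intro sum.cong refl) (auto intro!: sum.neutral)
  then show ?thesis by (simp add: Rmult_def)
qed

lemma jnd_top: "jnd p l k a l = a k"
  by (simp add: jnd_def)

lemma res_in_Rcarrier: "res p l k a \<in> Rcarrier k"
  by (simp add: Rcarrier_def res_def)

lemma jnd_in_Rcarrier: "k \<le> l \<Longrightarrow> jnd p l k a \<in> Rcarrier l"
  by (simp add: Rcarrier_def jnd_def)

lemma mem_S_ideal_iff: "z \<in> S_ideal q j \<longleftrightarrow> z \<in> Rcarrier j \<and> (\<forall>t. int q dvd z t)"
proof
  assume "z \<in> Rcarrier j \<and> (\<forall>t. int q dvd z t)"
  moreover define c where "c t = z t div int q" for t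
  ultimately have "z = (\<lambda>t. int q * c t)" "c \<in> Rcarrier j"
    by (auto simp: Rcarrier_def)
  then show "z \<in> S_ideal q j" unfolding S_ideal_def principal_int_def by blast
qed (auto simp: S_ideal_def principal_int_def Rcarrier_def)

lemma dvd_coeff_if_dvd_res_tops:
  fixes n :: int
  assumes "coprime n (int p)" "a \<in> Rcarrier k" "\<forall>i\<le>k. n dvd res p k i a i"
  shows "n dvd a t"
proof (cases "t \<le> k")
  case False
  then show ?thesis using assms(2) by (simp add: Rcarrier_def)
next
  case True
  then show ?thesis
  proof (induction "k - t" arbitrary: t rule: less_induct)
    case less
    have "n dvd (\<Sum>s\<in>{Suc t..k}. int p ^ (k - s) * a s)"
      using less.hyps by (intro dvd_sum dvd_mult) auto
    moreover have "res p k t a t = int p ^ (k - t) * a t + (\<Sum>s\<in>{Suc t..k}. int p ^ (k - s) * a s)"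
      using less.prems by (simp add: res_def sum.atLeast_Suc_atMost)
    ultimately have "n dvd int p ^ (k - t) * a t"
      using assms(3) less.prems by (metis dvd_add_left_iff)
    then show ?case using assms(1) by (simp add: coprime_dvd_mult_right_iff)
  qed
qed

lemma dvd_res:
  fixes n :: int
  assumes "\<forall>s. n dvd a s"
  shows "n dvd res p l k a t"
  using assms by (auto simp: res_def intro!: dvd_sum)

lemma dvd_jnd_Suc:
  fixes n :: int
  assumes "prime p" "coprime n (int p)" "\<forall>s. n dvd a s"
  shows "n dvd jnd p (Suc k) k a t"
proof -
  have n_dvd_pow: "n dvd x ^ p" if "n dvd x" for x
    using that prime_gt_0_nat[OF assms(1)] dvd_power dvd_trans by blast
  consider "t = Suc k" | "t = k" | "t < k" | "Suc k < t" by linarith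
  then show ?thesis
  proof cases
    case 1
    then show ?thesis using assms(3) by (simp add: jnd_def)
  next
    case 2
    have "n dvd (a k ^ p - a k) div int p"
      using assms prime_dvd_power_minus_self n_dvd_pow by (intro coprime_dvd_div) auto
    then show ?thesis using 2 by (simp add: jnd_def)
  next
    case 3
    define A where "A = (\<Sum>s\<in>{t..k}. a s * int p ^ (k - s))"
    define B where "B = (\<Sum>s\<in>{t+1..k}. a s * int p ^ (k - s))"
    have "A - B = a t * int p ^ (k - t)"
      using 3 by (simp add: A_def B_def sum.atLeast_Suc_atMost)
    then have "int p ^ Suc (k - t) dvd A ^ p - B ^ p"
      using 3 by (intro lifting_exponent_step) (simp_all add: dvd_power)
    moreover have "n dvd A" "n dvd B"
      unfolding A_def B_def using assms(3) by (auto intro!: dvd_sum)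
    ultimately have "n dvd (A ^ p - B ^ p) div int p ^ Suc (k - t)"
      using assms(2) n_dvd_pow by (intro coprime_dvd_div) auto
    then show ?thesis using 3 by (simp add: jnd_def A_def B_def Suc_diff_le)
  next
    case 4
    then show ?thesis by (simp add: jnd_def)
  qed
qed

lemma R_ideal_S_ideal: "R_ideal p j (S_ideal q j)"
  unfolding R_ideal_def
proof (intro conjI ballI)
  show "S_ideal q j \<subseteq> Rcarrier j" "S_ideal q j \<noteq> {}"
    using mem_S_ideal_iff[of "\<lambda>t. 0"] by (auto simp: mem_S_ideal_iff Rcarrier_def)
next
  fix a b assume "a \<in> S_ideal q j" "b \<in> S_ideal q j"
  then show "Radd j a b \<in> S_ideal q j"
    by (auto simp: mem_S_ideal_iff Radd_def Rcarrier_def)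
next
  fix a x assume "a \<in> S_ideal q j"
  then show "Rmult p j x a \<in> S_ideal q j"
    by (auto simp: mem_S_ideal_iff Rmult_def Rcarrier_def intro!: dvd_sum)
qed

lemma Tambara_ideal_S_ideal:
  assumes "prime p" "coprime (int q) (int p)"
  shows "Tambara_ideal p n (S_ideal q)"
  unfolding Tambara_ideal_def
proof (intro conjI allI impI R_ideal_S_ideal image_subsetI)
  fix k a assume "1 \<le> k \<and> k \<le> n"
  then obtain k' where k: "k = Suc k'" using Suc_le_D by force
  {
    assume "a \<in> S_ideal q (k - 1)"
    then show "ind k (k - 1) a \<in> S_ideal q k"
      by (auto simp: mem_S_ideal_iff ind_def Rcarrier_def)
  next
    assume "a \<in> S_ideal q k"
    then show "res p k (k - 1) a \<in> S_ideal q (k - 1)"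
      by (simp add: mem_S_ideal_iff dvd_res res_in_Rcarrier)
  next
    assume "a \<in> S_ideal q (k - 1)"
    then show "jnd p k (k - 1) a \<in> S_ideal q k"
      unfolding k using assms by (simp add: mem_S_ideal_iff dvd_jnd_Suc jnd_in_Rcarrier)
  }
qed

lemma S_ideal_prime_condition:
  assumes "prime q" "coprime (int q) (int p)" "a \<in> Rcarrier k" "b \<in> Rcarrier l"
    and products: "\<forall>i\<le>k. \<forall>j\<le>l.
      Rmult p (max i j) (jnd p (max i j) i (res p k i a)) (jnd p (max i j) j (res p l j b))
        \<in> S_ideal q (max i j)"
  shows "a \<in> S_ideal q k \<or> b \<in> S_ideal q l"
proof (rule ccontr)
  assume "\<not> ?thesis"
  then have "\<not> (\<forall>t. int q dvd a t)" "\<not> (\<forall>t. int q dvd b t)"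
    using assms(3,4) by (simp_all add: mem_S_ideal_iff)
  then obtain i j where ij: "i \<le> k" "j \<le> l"
    and "\<not> int q dvd res p k i a i" "\<not> int q dvd res p l j b j"
    using dvd_coeff_if_dvd_res_tops[OF assms(2)] assms(3,4) by metis
  then have "\<not> int q dvd res p k i a i * res p l j b j"
    using assms(1) by (simp add: prime_dvd_mult_iff)
  moreover have "int q dvd Rmult p (max i j) (jnd p (max i j) i (res p k i a))
      (jnd p (max i j) j (res p l j b)) (max i j)"
    using products ij by (simp add: mem_S_ideal_iff)
  ultimately show False by (simp add: Rmult_top jnd_top)
qed

theorem proposition6:
  fixes p q r k :: nat
  assumes "prime p" and "prime q" and "q \<noteq> p" and "k \<le> r"
  shows "Tambara_prime p k (S_ideal q)"
proof -
  \<comment> \<open>The bound k \<le> r only places H_k inside \<int>/p^r.\<close>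
  have coprime: "coprime (int q) (int p)"
    using assms(1-3) primes_coprime by auto
  have "(\<lambda>t. if t = 0 then 1 else 0) \<in> Rcarrier 0 - S_ideal q 0"
    using assms(2) by (auto simp: Rcarrier_def mem_S_ideal_iff dest: spec[of _ 0])
  then have "S_ideal q 0 \<noteq> Rcarrier 0" by blast
  then show ?thesis
    unfolding Tambara_prime_def Tambara_proper_def
    using Tambara_ideal_S_ideal[OF assms(1) coprime] S_ideal_prime_condition[OF assms(2) coprime]
    by blast
qed

end
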